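(* Let $\mathcal A$ be a causal linear time-invariant algorithm with state-space realization $(A,B,C,D)$ whose oracles are (sub)gradients, and let $i\ne j$ be oracle indices with $D_{ii}\ne0$ and $D_{jj}\ne0$. Then $\mathcal C_i\mathcal C_j\mathcal A=\mathcal C_j\mathcal C_i\mathcal A=\mathcal C_{\{i,j\}}\mathcal A$.
   Context: A linear time-invariant algorithm generates $x^{k+1}=Ax^k+Bu^k$, $y^k=Cx^k+Du^k$, $u^k=\phi(y^k)$, with oracles $\partial f_1,\dots,\partial f_n$ (subgradients of convex functions) called in the order $1,\dots,n$ each iteration; causality means each oracle call depends only on previously computed quantities, so $D$ (indexed blockwise by oracles in call order) is lower triangular. For a set $\kappa$ of oracle indices, $\mathcal C_\kappa\mathcal A$ is the algorithm obtained by rewriting $\mathcal A$ to call $\partial f_i^\star=(\partial f_i)^{-1}$ ($f^\star$ the Fenchel conjugate) instead of $\partial f_i$ for $i\in\kappa$; $\mathcal C_i=\mathcal C_{\{i\}}$. Algorithms are compared via their transfer functions $C(zI-A)^{-1}B+D$. *)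

theory Defs
  imports "HOL-Analysis.Analysis"
begin

text \<open>A linear time-invariant algorithm given by a state-space realization (A,B,C,D):
  x(k+1) = A x(k) + B u(k),  y(k) = C x(k) + D u(k),  u(k) = phi(y(k)).
  The state space is indexed by the finite type 's, the oracles by the finite
  linearly ordered type 'm (the order is the call order of the oracles).\<close>

datatype ('s, 'm) lti = LTI
  (sA: "real^'s^'s") (sB: "real^'m^'s") (sC: "real^'s^'m") (sD: "real^'m^'m")

definition causal :: "('s::finite, 'm::{finite,linorder}) lti \<Rightarrow> bool" where
  "causal R \<longleftrightarrow> (\<forall>p q. p < q \<longrightarrow> sD R $ p $ q = 0)"

text \<open>R' is a realization of the algorithm obtained from R by calling the
  conjugate oracles (partial f_k)^{-1} for k in kappa instead of partial f_k:
  for these oracles the roles of oracle input y_k and output u_k are swapped,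
  while the state and all other quantities are computed as before.\<close>
definition is_conj :: "'m set \<Rightarrow> ('s::finite, 'm::finite) lti \<Rightarrow> ('s, 'm) lti \<Rightarrow> bool" where
  "is_conj \<kappa> R R' \<longleftrightarrow>
     (\<forall>x u. let y  = sC R *v x + sD R *v u;
                u' = (\<chi> k. if k \<in> \<kappa> then y $ k else u $ k);
                y' = (\<chi> k. if k \<in> \<kappa> then u $ k else y $ k)
            in sA R' *v x + sB R' *v u' = sA R *v x + sB R *v u
             \<and> sC R' *v x + sD R' *v u' = y')"

definition conj_defined :: "'m set \<Rightarrow> ('s::finite, 'm::finite) lti \<Rightarrow> bool" where
  "conj_defined \<kappa> R \<longleftrightarrow> (\<exists>!R'. is_conj \<kappa> R R')"

definition conj :: "'m set \<Rightarrow> ('s::finite, 'm::finite) lti \<Rightarrow> ('s, 'm) lti" where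
  "conj \<kappa> R = (THE R'. is_conj \<kappa> R R')"

definition cmat :: "real^'b^'a \<Rightarrow> complex^'b^'a" where
  "cmat M = (\<chi> i j. complex_of_real (M $ i $ j))"

definition transfer :: "('s::finite, 'm::finite) lti \<Rightarrow> complex \<Rightarrow> complex^'m^'m" where
  "transfer R z = cmat (sC R) ** matrix_inv (mat z - cmat (sA R)) ** cmat (sB R) + cmat (sD R)"

text \<open>Two algorithms are identified when their transfer functions coincide
  (as rational functions, i.e. at every z that is not a pole of either realization).\<close>
definition same_tf :: "('s::finite, 'm::finite) lti \<Rightarrow> ('s, 'm) lti \<Rightarrow> bool" where
  "same_tf R R' \<longleftrightarrow> (\<forall>z. det (mat z - cmat (sA R)) \<noteq> 0 \<longrightarrow> det (mat z - cmat (sA R')) \<noteq> 0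
       \<longrightarrow> transfer R z = transfer R' z)"

end

theory Submission
  imports Defs
begin

(* Calling the conjugate oracle for k swaps the roles of u_k and y_k. If D_kk is nonzero, this
   swap can be solved for u, linearly in (x, u'), which gives a realization of C_k A; it is
   unique because the swap is onto. Conjugating i after j performs precisely the swap for
   {i, j}, and it is well defined because the new D_ii equals D_ii - D_ij D_ji / D_jj, which is
   the old D_ii since causality forces D_ij D_ji = 0. So both orders give the unique
   realization of C_{i,j} A. *)

lemma linear_pair_eq_matrix_sum:
  fixes P :: "real^'a \<Rightarrow> real^'b \<Rightarrow> real^'c"
  assumes lin: "linear (\<lambda>(x, w). P x w)"
  shows "P x w = matrix (\<lambda>x. P x 0) *v x + matrix (\<lambda>w. P 0 w) *v w"
proof -
  have "linear (\<lambda>x. P x 0)"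
    by (rule linearI)
      (use linear_add[OF lin, of "(a, 0)" "(b, 0)" for a b]
        linear_scale[OF lin, of _ "(a, 0)" for a] in auto)
  moreover have "linear (\<lambda>w. P 0 w)"
    by (rule linearI)
      (use linear_add[OF lin, of "(0, a)" "(0, b)" for a b]
        linear_scale[OF lin, of _ "(0, a)" for a] in auto)
  moreover have "P x w = P x 0 + P 0 w"
    using linear_add[OF lin, of "(x, 0)" "(0, w)"] by simp
  ultimately show ?thesis by simp
qed

lemma matrix_vector_mult_axis_nth: "((M :: 'a::semiring_1^'n^'m) *v axis k c) $ i = M $ i $ k * c"
  by (simp add: matrix_vector_mult_def axis_def if_distrib cong: if_cong)

definition conj_u :: "'m set \<Rightarrow> ('s::finite, 'm::finite) lti \<Rightarrow> real^'s \<Rightarrow> real^'m \<Rightarrow> real^'m" where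
  "conj_u K R x u = (\<chi> k. if k \<in> K then (sC R *v x + sD R *v u) $ k else u $ k)"

definition conj_y :: "'m set \<Rightarrow> ('s::finite, 'm::finite) lti \<Rightarrow> real^'s \<Rightarrow> real^'m \<Rightarrow> real^'m" where
  "conj_y K R x u = (\<chi> k. if k \<in> K then u $ k else (sC R *v x + sD R *v u) $ k)"

lemma is_conj_iff:
  "is_conj K R R' \<longleftrightarrow> (\<forall>x u.
     sA R' *v x + sB R' *v conj_u K R x u = sA R *v x + sB R *v u \<and>
     sC R' *v x + sD R' *v conj_u K R x u = conj_y K R x u)"
  by (simp add: is_conj_def Let_def conj_u_def conj_y_def)

lemma linear_conj_y: "linear (\<lambda>(x, u). conj_y K R x u)"
  by (rule linearI) (auto simp: conj_y_def vec_eq_iff split_beta algebra_simps)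

(* t = (w_k - (C x + D w)_k) / D_kk solves (C x + D (w + t e_k))_k = w_k. *)
definition conj_u_inv :: "('s::finite, 'm::finite) lti \<Rightarrow> 'm \<Rightarrow> real^'s \<Rightarrow> real^'m \<Rightarrow> real^'m" where
  "conj_u_inv R k x w = w + axis k ((w $ k - (sC R *v x + sD R *v w) $ k) / sD R $ k $ k)"

lemma linear_conj_u_inv: "linear (\<lambda>(x, w). conj_u_inv R k x w)"
  by (rule linearI) (auto simp: conj_u_inv_def vec_eq_iff axis_def split_beta
      algebra_simps add_divide_distrib diff_divide_distrib)

lemma conj_u_conj_u_inv:
  assumes "sD R $ k $ k \<noteq> 0"
  shows "conj_u {k} R x (conj_u_inv R k x w) = w"
proof -
  have "(sC R *v x + sD R *v conj_u_inv R k x w) $ k = w $ k"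
    using assms by (simp add: conj_u_inv_def matrix_vector_right_distrib
        matrix_vector_mult_axis_nth field_simps)
  then show ?thesis
    by (simp add: conj_u_def conj_u_inv_def vec_eq_iff axis_def)
qed

lemma conj_u_inv_conj_u:
  assumes "sD R $ k $ k \<noteq> 0"
  shows "conj_u_inv R k x (conj_u {k} R x u) = u"
proof -
  define y where "y = (sC R *v x + sD R *v u) $ k"
  have v: "conj_u {k} R x u = u + axis k (y - u $ k)"
    by (auto simp: y_def conj_u_def vec_eq_iff axis_def)
  have "(sD R *v conj_u {k} R x u) $ k = (sD R *v u) $ k + sD R $ k $ k * (y - u $ k)"
    by (simp add: v matrix_vector_right_distrib matrix_vector_mult_axis_nth)
  then show ?thesis
    using assms by (simp add: conj_u_inv_def v vec_eq_iff axis_def y_def field_simps)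
qed

definition conj_realization ::
    "'m set \<Rightarrow> ('s::finite, 'm::finite) lti \<Rightarrow> (real^'s \<Rightarrow> real^'m \<Rightarrow> real^'m) \<Rightarrow> ('s, 'm) lti" where
  "conj_realization K R g = LTI
     (matrix (\<lambda>x. sA R *v x + sB R *v g x 0)) (matrix (\<lambda>w. sB R *v g 0 w))
     (matrix (\<lambda>x. conj_y K R x (g x 0))) (matrix (\<lambda>w. conj_y K R 0 (g 0 w)))"

lemma is_conj_conj_realization:
  assumes lin: "linear (\<lambda>(x, w). g x w)"
    and inv: "\<And>x u. g x (conj_u K R x u) = u"
  shows "is_conj K R (conj_realization K R g)"
  unfolding is_conj_iff
proof (intro allI conjI)
  fix x u
  have "linear (\<lambda>(x, w). sA R *v x + sB R *v g x w)"
    using linear_add[OF lin] linear_scale[OF lin]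
    by (intro linearI) (auto simp: split_beta matrix_vector_right_distrib matrix_vector_mult_scaleR
        scaleR_right_distrib)
  from linear_pair_eq_matrix_sum[OF this, of x "conj_u K R x u"]
  show "sA (conj_realization K R g) *v x + sB (conj_realization K R g) *v conj_u K R x u
      = sA R *v x + sB R *v u"
    by (simp add: conj_realization_def inv)
  have "linear (\<lambda>(x, w). conj_y K R x (g x w))"
    using linear_add[OF lin] linear_scale[OF lin]
      linear_add[OF linear_conj_y] linear_scale[OF linear_conj_y]
    by (intro linearI) (auto simp: split_beta)
  from linear_pair_eq_matrix_sum[OF this, of x "conj_u K R x u"]
  show "sC (conj_realization K R g) *v x + sD (conj_realization K R g) *v conj_u K R x u
      = conj_y K R x u"
    by (simp add: conj_realization_def inv)
qed

lemma is_conj_unique: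
  assumes surj: "\<And>x. surj (conj_u K R x)"
    and conj1: "is_conj K R R1" and conj2: "is_conj K R R2"
  shows "R1 = R2"
proof -
  have eq: "sA R1 *v x + sB R1 *v w = sA R2 *v x + sB R2 *v w
      \<and> sC R1 *v x + sD R1 *v w = sC R2 *v x + sD R2 *v w" for x w
  proof -
    obtain u where "w = conj_u K R x u" using surj by (metis surjD)
    then show ?thesis using conj1 conj2 unfolding is_conj_iff by metis
  qed
  have "sA R1 = sA R2" "sC R1 = sC R2" using eq[of _ 0] by (simp_all add: matrix_eq)
  moreover have "sB R1 = sB R2" "sD R1 = sD R2" using eq[of 0] by (simp_all add: matrix_eq)
  ultimately show ?thesis by (cases R1; cases R2) simp
qed

lemma conj_defined_conj_eq:
  assumes "\<And>x. surj (conj_u K R x)" and "is_conj K R R'"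
  shows "conj_defined K R \<and> conj K R = R'"
  using is_conj_unique[OF assms(1)] assms(2) unfolding conj_defined_def conj_def by blast

lemma surj_conj_u_singleton:
  assumes "sD R $ k $ k \<noteq> 0"
  shows "surj (conj_u {k} R x)"
  by (metis assms conj_u_conj_u_inv surjI)

lemma conj_singleton:
  assumes "sD R $ k $ k \<noteq> 0"
  shows "conj_defined {k} R \<and> is_conj {k} R (conj {k} R)"
proof -
  have "is_conj {k} R (conj_realization {k} R (conj_u_inv R k))"
    using is_conj_conj_realization[OF linear_conj_u_inv conj_u_inv_conj_u[OF assms]] .
  with conj_defined_conj_eq[OF surj_conj_u_singleton[OF assms] this] show ?thesis by simp
qed

lemma is_conj_singleton_diag:
  assumes "causal R" and "i \<noteq> k" and "sD R $ k $ k \<noteq> 0" and "is_conj {k} R R'"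
  shows "sD R' $ i $ i = sD R $ i $ i"
proof -
  define u where "u = conj_u_inv R k 0 (axis i 1)"
  have axis_k: "axis i (1::real) $ k = 0"
    using assms(2) by (simp add: axis_def)
  have "sD R' *v axis i 1 = conj_y {k} R 0 u"
    using assms(4) conj_u_conj_u_inv[OF assms(3), of 0 "axis i 1"]
    unfolding is_conj_iff u_def by (metis add_0 matrix_vector_mult_0_right)
  then have "sD R' $ i $ i = (sD R *v u) $ i"
    using assms(2) by (simp add: vec_eq_iff conj_y_def matrix_vector_mult_axis_nth)
  also have "\<dots> = sD R $ i $ i - sD R $ i $ k * sD R $ k $ i / sD R $ k $ k"
    using axis_k
    by (simp add: u_def conj_u_inv_def matrix_vector_right_distrib matrix_vector_mult_axis_nth)
  also have "sD R $ i $ k * sD R $ k $ i = 0"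
    using assms(1,2) unfolding causal_def by (cases "i < k") (auto simp: not_less_iff_gr_or_eq)
  finally show ?thesis by simp
qed

lemma conj_u_conj_u_union:
  assumes "K \<inter> L = {}" and "is_conj L R R1"
  shows "conj_u K R1 x (conj_u L R x u) = conj_u (K \<union> L) R x u"
    and "conj_y K R1 x (conj_u L R x u) = conj_y (K \<union> L) R x u"
proof -
  have "sC R1 *v x + sD R1 *v conj_u L R x u = conj_y L R x u"
    using assms(2) unfolding is_conj_iff by blast
  then show "conj_u K R1 x (conj_u L R x u) = conj_u (K \<union> L) R x u"
    and "conj_y K R1 x (conj_u L R x u) = conj_y (K \<union> L) R x u"
    using assms(1) by (auto simp: conj_u_def conj_y_def vec_eq_iff)
qed

lemma is_conj_union:
  assumes "K \<inter> L = {}" and "is_conj L R R1" and "is_conj K R1 R2"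
  shows "is_conj (K \<union> L) R R2"
  using assms(2,3) unfolding is_conj_iff by (simp add: conj_u_conj_u_union[OF assms(1,2), symmetric])

lemma surj_conj_u_union:
  assumes "K \<inter> L = {}" and "is_conj L R R1"
    and "surj (conj_u L R x)" and "surj (conj_u K R1 x)"
  shows "surj (conj_u (K \<union> L) R x)"
proof -
  have "conj_u (K \<union> L) R x = conj_u K R1 x \<circ> conj_u L R x"
    using conj_u_conj_u_union(1)[OF assms(1,2)] by (simp add: fun_eq_iff)
  then show ?thesis using comp_surj[OF assms(3,4)] by simp
qed

lemma conj_conj_singletons:
  assumes "causal R" and "i \<noteq> j" and "sD R $ i $ i \<noteq> 0" and "sD R $ j $ j \<noteq> 0"
  shows "conj_defined {j} R \<and> conj_defined {i} (conj {j} R)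
    \<and> conj_defined {i, j} R \<and> conj {i} (conj {j} R) = conj {i, j} R"
proof -
  define R1 where "R1 = conj {j} R"
  have R1: "conj_defined {j} R" "is_conj {j} R R1"
    using conj_singleton[OF assms(4)] R1_def by auto
  have D1: "sD R1 $ i $ i \<noteq> 0"
    using is_conj_singleton_diag[OF assms(1,2,4) R1(2)] assms(3) by simp
  then have R2: "conj_defined {i} R1" "is_conj {i} R1 (conj {i} R1)"
    using conj_singleton by auto
  have surj: "surj (conj_u {i} R1 x)" for x
    using surj_conj_u_singleton[OF D1] .
  have disj: "{i} \<inter> {j} = {}" and union: "{i} \<union> {j} = {i, j}"
    using assms(2) by auto
  have "conj_defined {i, j} R \<and> conj {i, j} R = conj {i} R1"
    using conj_defined_conj_eq is_conj_union[OF disj R1(2) R2(2)]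
      surj_conj_u_union[OF disj R1(2) surj_conj_u_singleton[OF assms(4)] surj]
    unfolding union by blast
  then show ?thesis using R1 R2 R1_def by simp
qed

theorem proposition8p4:
  fixes R :: "('s::finite, 'm::{finite,linorder}) lti" and i j :: 'm
  assumes "causal R"
    and "i \<noteq> j"
    and "sD R $ i $ i \<noteq> 0"
    and "sD R $ j $ j \<noteq> 0"
  shows "conj_defined {j} R \<and> conj_defined {i} (conj {j} R)
       \<and> conj_defined {i} R \<and> conj_defined {j} (conj {i} R)
       \<and> conj_defined {i, j} R
       \<and> same_tf (conj {i} (conj {j} R)) (conj {i, j} R)
       \<and> same_tf (conj {j} (conj {i} R)) (conj {i, j} R)
       \<and> same_tf (conj {i} (conj {j} R)) (conj {j} (conj {i} R))"
  using conj_conj_singletons[OF assms]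
    conj_conj_singletons[OF assms(1) assms(2)[symmetric] assms(4,3)]
  by (simp add: insert_commute same_tf_def)

end
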